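(* Suppose $(f_0,\dots,f_4)$ is a rational solution of $A_4(\alpha_0,\dots,\alpha_4)$ and some of $f_0,\dots,f_4$ have a pole at $t=\infty$. Then one of the following holds (indices modulo 5): (1) for some $i$, $f_i$ has a pole of first order at $t=\infty$; (2) for some $i$, $f_i,f_{i+1},f_{i+3}$ have a pole of first order at $t=\infty$; (3) for some $i$, $f_i,f_{i+1},f_{i+2}$ have a pole of first order at $t=\infty$; (4) all of $f_0,\dots,f_4$ have a pole of first order at $t=\infty$.
   Context: The $A_4^{(1)}$ Painlevé equation $A_4(\alpha_0,\dots,\alpha_4)$ with complex parameters $\alpha_j$ is the system for five functions $f_0,\dots,f_4$ of $t$ (indices in $\mathbb{Z}/5\mathbb{Z}$, ${}'=d/dt$): $f_j'=f_j(f_{j+1}-f_{j+2}+f_{j+3}-f_{j+4})+\alpha_j$ ($j=0,\dots,4$), $f_0+\dots+f_4=t$; hence $\sum_j\alpha_j=1$. A rational solution is a tuple of rational functions of $t$ satisfying it. *)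

theory Defs
  imports "HOL-Analysis.Analysis" "HOL-Computational_Algebra.Polynomial"
begin

definition rat_fun_rep :: "(complex \<Rightarrow> complex) \<Rightarrow> complex poly \<Rightarrow> complex poly \<Rightarrow> bool" where
  "rat_fun_rep f p q \<longleftrightarrow> q \<noteq> 0 \<and> (\<forall>t. poly q t \<noteq> 0 \<longrightarrow> f t = poly p t / poly q t)"

definition pole_order_inf :: "complex poly \<Rightarrow> complex poly \<Rightarrow> int" where
  "pole_order_inf p q = int (degree p) - int (degree q)"

definition A4_rational_solution ::
  "(nat \<Rightarrow> complex \<Rightarrow> complex) \<Rightarrow> (nat \<Rightarrow> complex poly) \<Rightarrow> (nat \<Rightarrow> complex poly) \<Rightarrow> (nat \<Rightarrow> complex) \<Rightarrow> bool" where
  "A4_rational_solution f p q \<alpha> \<longleftrightarrow>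
     (\<forall>j<5. rat_fun_rep (f j) (p j) (q j)) \<and>
     (\<forall>t. (\<forall>k<5. poly (q k) t \<noteq> 0) \<longrightarrow>
        (\<forall>j<5. (f j has_field_derivative
            (f j t * (f ((j+1) mod 5) t - f ((j+2) mod 5) t + f ((j+3) mod 5) t - f ((j+4) mod 5) t)
             + \<alpha> j)) (at t))
        \<and> (\<Sum>j<5. f j t) = t)"

end

theory Submission
  imports Defs
begin

text \<open>Let \<open>N \<ge> 1\<close> be the largest pole order at \<open>t = \<infinity>\<close> and \<open>c\<^sub>j\<close> the coefficient of \<open>t^N\<close>
  in \<open>f\<^sub>j\<close>. As \<open>f\<^sub>j'\<close> has a pole of order less than \<open>2N\<close>, the coefficients of \<open>t^(2N)\<close> in the
  equations give \<open>c\<^sub>j (c\<^sub>j\<^sub>+\<^sub>1 - c\<^sub>j\<^sub>+\<^sub>2 + c\<^sub>j\<^sub>+\<^sub>3 - c\<^sub>j\<^sub>+\<^sub>4) = 0\<close>, and the coefficient of \<open>t^N\<close>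
  in \<open>\<Sum> f\<^sub>j = t\<close> gives \<open>\<Sum> c\<^sub>j = 1\<close> if \<open>N = 1\<close> and \<open>\<Sum> c\<^sub>j = 0\<close> if \<open>N > 1\<close>. With
  \<open>\<Sum> c\<^sub>j = 0\<close> this quadratic system only has the solution \<open>c = 0\<close>, contradicting the
  choice of \<open>N\<close>; hence \<open>N = 1\<close>, and the supports of the solutions with \<open>\<Sum> c\<^sub>j = 1\<close> are
  exactly the pole sets listed in the theorem.\<close>

lemma tendsto_poly_div_power:
  fixes a :: "'a::real_normed_field poly"
  assumes "degree a \<le> m"
  shows "(\<lambda>n. poly a (of_nat n) / of_nat n ^ m) \<longlonglongrightarrow> coeff a m"
proof -
  have "(\<lambda>n. poly (reflect_poly a) (inverse (of_nat n)) * inverse (of_nat n) ^ (m - degree a))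
      \<longlonglongrightarrow> poly (reflect_poly a) 0 * 0 ^ (m - degree a)"
    by (intro tendsto_intros lim_inverse_n isCont_tendsto_compose[OF poly_isCont])
  also have "poly (reflect_poly a) 0 * 0 ^ (m - degree a) = coeff a m"
    using assms by (cases "m = degree a") (auto simp: coeff_eq_0)
  finally show ?thesis
  proof (rule Lim_transform_eventually[OF _ eventually_sequentiallyI])
    fix n :: nat assume "n \<ge> 1"
    have "(of_nat n :: 'a) ^ m = of_nat n ^ degree a * of_nat n ^ (m - degree a)"
      using assms by (simp flip: power_add)
    then show "poly (reflect_poly a) (inverse (of_nat n)) * inverse (of_nat n) ^ (m - degree a)
      = poly a (of_nat n) / of_nat n ^ m"
      using \<open>n \<ge> 1\<close> by (simp add: poly_reflect_poly_nz field_simps power_inverse)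
  qed
qed

lemma tendsto_poly_ratio:
  fixes a b :: "'a::real_normed_field poly"
  assumes "b \<noteq> 0" "degree a \<le> degree b + k"
  shows "(\<lambda>n. poly a (of_nat n) / (poly b (of_nat n) * of_nat n ^ k))
           \<longlonglongrightarrow> coeff a (degree b + k) / lead_coeff b"
proof -
  have "(\<lambda>n. (poly a (of_nat n) / of_nat n ^ (degree b + k)) / (poly b (of_nat n) / of_nat n ^ degree b))
      \<longlonglongrightarrow> coeff a (degree b + k) / lead_coeff b"
    using assms by (intro tendsto_divide tendsto_poly_div_power) auto
  then show ?thesis
    by (rule Lim_transform_eventually[OF _ eventually_sequentiallyI[of 1]])
      (auto simp: power_add field_simps)
qed

lemma eventually_poly_of_nat_nonzero:
  fixes q :: "'a::real_normed_field poly"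
  assumes "q \<noteq> 0"
  shows "\<forall>\<^sub>F n in sequentially. poly q (of_nat n) \<noteq> 0"
proof -
  have "(\<lambda>n. poly q (of_nat n) / of_nat n ^ degree q) \<longlonglongrightarrow> lead_coeff q"
    by (rule tendsto_poly_div_power) simp
  then have "\<forall>\<^sub>F n in sequentially. poly q (of_nat n) / of_nat n ^ degree q \<noteq> 0"
    using assms by (intro tendsto_imp_eventually_ne) auto
  then show ?thesis by (rule eventually_mono) auto
qed

lemma rat_fun_rep_has_field_derivative:
  assumes "rat_fun_rep f p q" "poly q t \<noteq> 0"
  shows "(f has_field_derivative poly (pderiv p * q - p * pderiv q) t / poly (q ^ 2) t) (at t)"
proof -
  have "((\<lambda>x. poly p x / poly q x) has_field_derivative
      poly (pderiv p * q - p * pderiv q) t / poly (q ^ 2) t) (at t)"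
    using DERIV_divide[OF poly_DERIV poly_DERIV assms(2)] by (simp add: power2_eq_square)
  moreover have "open {x. poly q x \<noteq> 0}"
    by (intro open_Collect_neq continuous_on_poly continuous_on_id continuous_on_const)
  ultimately show ?thesis
    using assms unfolding rat_fun_rep_def
    by (elim has_field_derivative_transform_within_open) auto
qed

text \<open>The coefficient of \<open>t ^ N\<close> in the expansion of \<open>p / q\<close> at \<open>t = \<infinity>\<close>, provided \<open>p / q\<close> has
  a pole of order at most \<open>N\<close> there.\<close>
definition coeff_at_inf :: "'a::field poly \<Rightarrow> 'a poly \<Rightarrow> nat \<Rightarrow> 'a" where
  "coeff_at_inf p q N = coeff p (degree q + N) / lead_coeff q"

lemma coeff_at_inf_nonzero_iff:
  assumes "q \<noteq> 0" "degree p \<le> degree q + N" "N \<ge> 1"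
  shows "coeff_at_inf p q N \<noteq> 0 \<longleftrightarrow> pole_order_inf p q = int N"
proof
  assume "coeff_at_inf p q N \<noteq> 0"
  then have "degree q + N \<le> degree p" unfolding coeff_at_inf_def by (auto intro: le_degree)
  then show "pole_order_inf p q = int N" using assms(2) unfolding pole_order_inf_def by simp
next
  assume "pole_order_inf p q = int N"
  then have deg: "degree p = degree q + N" unfolding pole_order_inf_def by simp
  then have "p \<noteq> 0" using assms(3) by auto
  then show "coeff_at_inf p q N \<noteq> 0" using assms(1) unfolding coeff_at_inf_def by (simp flip: deg)
qed

lemma rat_fun_rep_tendsto_div_power:
  assumes "rat_fun_rep f p q" "degree p \<le> degree q + N"
  shows "(\<lambda>n. f (of_nat n) / of_nat n ^ N) \<longlonglongrightarrow> coeff_at_inf p q N"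
proof -
  have "q \<noteq> 0" using assms(1) unfolding rat_fun_rep_def by simp
  then have "(\<lambda>n. poly p (of_nat n) / (poly q (of_nat n) * of_nat n ^ N)) \<longlonglongrightarrow> coeff_at_inf p q N"
    unfolding coeff_at_inf_def using assms(2) by (rule tendsto_poly_ratio)
  then show ?thesis
    using eventually_poly_of_nat_nonzero[OF \<open>q \<noteq> 0\<close>] assms(1)
    by (elim Lim_transform_eventually eventually_mono) (simp add: rat_fun_rep_def)
qed

lemma rat_fun_rep_tendsto_deriv_div_power:
  assumes "rat_fun_rep f p q" "degree p \<le> degree q + N" "N \<ge> 1"
  shows "(\<lambda>n. deriv f (of_nat n) / of_nat n ^ (2 * N)) \<longlonglongrightarrow> 0"
proof -
  define A where "A = pderiv p * q - p * pderiv q"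
  have "q \<noteq> 0" using assms(1) unfolding rat_fun_rep_def by simp
  have "degree (pderiv p * q) \<le> degree p + degree q"
    using degree_mult_le[of "pderiv p" q] by (simp add: degree_pderiv)
  moreover have "degree (p * pderiv q) \<le> degree p + degree q"
    using degree_mult_le[of p "pderiv q"] by (simp add: degree_pderiv)
  ultimately have "degree A \<le> degree p + degree q"
    unfolding A_def by (rule degree_diff_le)
  then have "degree A < degree (q ^ 2) + 2 * N"
    using assms(2,3) \<open>q \<noteq> 0\<close> by (simp add: degree_power_eq)
  then have "(\<lambda>n. poly A (of_nat n) / (poly (q ^ 2) (of_nat n) * of_nat n ^ (2 * N))) \<longlonglongrightarrow> 0"
    using tendsto_poly_ratio[of "q ^ 2" A "2 * N"] \<open>q \<noteq> 0\<close> by (simp add: coeff_eq_0)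
  then show ?thesis
    using eventually_poly_of_nat_nonzero[OF \<open>q \<noteq> 0\<close>]
  proof (elim Lim_transform_eventually eventually_mono)
    fix n :: nat assume "poly q (of_nat n) \<noteq> 0"
    then show "poly A (of_nat n) / (poly (q ^ 2) (of_nat n) * of_nat n ^ (2 * N))
        = deriv f (of_nat n) / of_nat n ^ (2 * N)"
      using DERIV_imp_deriv[OF rat_fun_rep_has_field_derivative[OF assms(1)]]
      unfolding A_def by simp
  qed
qed

definition A4_stationary :: "(nat \<Rightarrow> 'a::comm_ring) \<Rightarrow> bool" where
  "A4_stationary c \<longleftrightarrow>
     (\<forall>j<5. c j * (c ((j+1) mod 5) - c ((j+2) mod 5) + c ((j+3) mod 5) - c ((j+4) mod 5)) = 0)"

lemma
  assumes "A4_rational_solution f p q \<alpha>"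
  shows A4_rational_solution_rat_fun_rep: "j < 5 \<Longrightarrow> rat_fun_rep (f j) (p j) (q j)"
    and A4_rational_solution_deriv: "\<lbrakk>\<forall>k<5. poly (q k) t \<noteq> 0; j < 5\<rbrakk> \<Longrightarrow>
      deriv (f j) t = f j t * (f ((j+1) mod 5) t - f ((j+2) mod 5) t + f ((j+3) mod 5) t
        - f ((j+4) mod 5) t) + \<alpha> j"
    and A4_rational_solution_sum: "\<forall>k<5. poly (q k) t \<noteq> 0 \<Longrightarrow> (\<Sum>j<5. f j t) = t"
  using assms DERIV_imp_deriv unfolding A4_rational_solution_def by blast+

lemma A4_eventually_denominators_nonzero:
  assumes "A4_rational_solution f p q \<alpha>"
  shows "\<forall>\<^sub>F n in sequentially. (\<forall>k<5. poly (q k) (of_nat n) \<noteq> 0) \<and> of_nat n \<noteq> (0::complex)"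
proof -
  have "\<forall>\<^sub>F n in sequentially. \<forall>k\<in>{..<5}. poly (q k) (of_nat n) \<noteq> 0"
    using A4_rational_solution_rat_fun_rep[OF assms] unfolding rat_fun_rep_def
    by (intro eventually_ball_finite ballI eventually_poly_of_nat_nonzero) auto
  moreover have "\<forall>\<^sub>F n in sequentially. of_nat n \<noteq> (0::complex)"
    by (rule eventually_sequentiallyI[of 1]) auto
  ultimately show ?thesis by eventually_elim auto
qed

lemma A4_stationary_coeff_at_inf:
  assumes sol: "A4_rational_solution f p q \<alpha>"
    and deg: "\<forall>j<5. degree (p j) \<le> degree (q j) + N" and "N \<ge> 1"
  shows "A4_stationary (\<lambda>j. coeff_at_inf (p j) (q j) N)"
  unfolding A4_stationary_def
proof (intro allI impI)
  fix j :: nat assume "j < 5"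
  define c where "c j = coeff_at_inf (p j) (q j) N" for j
  define G where "G x = f ((j+1) mod 5) x - f ((j+2) mod 5) x + f ((j+3) mod 5) x - f ((j+4) mod 5) x"
    for x
  define g where "g k n = f k (of_nat n) / of_nat n ^ N" for k n
  have lim_g: "g k \<longlonglongrightarrow> c k" if "k < 5" for k
    unfolding g_def c_def using A4_rational_solution_rat_fun_rep[OF sol that] deg that
    by (simp add: rat_fun_rep_tendsto_div_power)
  have lim_lhs: "(\<lambda>n. g j n * (g ((j+1) mod 5) n - g ((j+2) mod 5) n + g ((j+3) mod 5) n - g ((j+4) mod 5) n))
      \<longlonglongrightarrow> c j * (c ((j+1) mod 5) - c ((j+2) mod 5) + c ((j+3) mod 5) - c ((j+4) mod 5))"
    using \<open>j < 5\<close> by (intro tendsto_mult tendsto_add tendsto_diff lim_g) simp_all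
  have "(\<lambda>n. deriv (f j) (of_nat n) / of_nat n ^ (2 * N)) \<longlonglongrightarrow> 0"
    using A4_rational_solution_rat_fun_rep[OF sol \<open>j < 5\<close>] deg \<open>j < 5\<close> \<open>N \<ge> 1\<close>
    by (simp add: rat_fun_rep_tendsto_deriv_div_power)
  moreover have "(\<lambda>n. \<alpha> j * inverse (of_nat n) ^ (2 * N)) \<longlonglongrightarrow> \<alpha> j * 0 ^ (2 * N)"
    by (intro tendsto_mult_left tendsto_power lim_inverse_n)
  ultimately have "(\<lambda>n. deriv (f j) (of_nat n) / of_nat n ^ (2 * N) - \<alpha> j * inverse (of_nat n) ^ (2 * N))
      \<longlonglongrightarrow> 0 - \<alpha> j * 0 ^ (2 * N)"
    by (rule tendsto_diff)
  then have lim_rhs: "(\<lambda>n. deriv (f j) (of_nat n) / of_nat n ^ (2 * N) - \<alpha> j * inverse (of_nat n) ^ (2 * N))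
      \<longlonglongrightarrow> 0"
    using \<open>N \<ge> 1\<close> by (simp add: zero_power)
  have "\<forall>\<^sub>F n in sequentially.
      g j n * (g ((j+1) mod 5) n - g ((j+2) mod 5) n + g ((j+3) mod 5) n - g ((j+4) mod 5) n)
      = deriv (f j) (of_nat n) / of_nat n ^ (2 * N) - \<alpha> j * inverse (of_nat n) ^ (2 * N)"
    using A4_eventually_denominators_nonzero[OF sol]
  proof (rule eventually_mono, elim conjE)
    fix n :: nat
    define x :: complex where "x = of_nat n"
    assume "\<forall>k<5. poly (q k) (of_nat n) \<noteq> 0"
    then have "deriv (f j) x = f j x * G x + \<alpha> j"
      unfolding G_def x_def using A4_rational_solution_deriv[OF sol _ \<open>j < 5\<close>] by blast
    moreover have "g j n * (g ((j+1) mod 5) n - g ((j+2) mod 5) n + g ((j+3) mod 5) n - g ((j+4) mod 5) n)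
        = f j x * G x / x ^ (2 * N)"
      unfolding g_def G_def x_def by (simp add: mult_2 power_add flip: diff_divide_distrib add_divide_distrib)
    ultimately show "g j n * (g ((j+1) mod 5) n - g ((j+2) mod 5) n + g ((j+3) mod 5) n
        - g ((j+4) mod 5) n) = deriv (f j) (of_nat n) / of_nat n ^ (2 * N) - \<alpha> j * inverse (of_nat n) ^ (2 * N)"
      unfolding x_def by (simp add: divide_inverse power_inverse algebra_simps)
  qed
  from LIMSEQ_unique[OF Lim_transform_eventually[OF lim_lhs this] lim_rhs]
  show "c j * (c ((j+1) mod 5) - c ((j+2) mod 5) + c ((j+3) mod 5) - c ((j+4) mod 5)) = 0" .
qed

lemma A4_sum_coeff_at_inf:
  assumes sol: "A4_rational_solution f p q \<alpha>"
    and deg: "\<forall>j<5. degree (p j) \<le> degree (q j) + N" and "N \<ge> 1"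
  shows "(\<Sum>j<5. coeff_at_inf (p j) (q j) N) = (if N = 1 then 1 else 0)"
proof -
  have lim: "(\<lambda>n. \<Sum>j<5. f j (of_nat n) / of_nat n ^ N) \<longlonglongrightarrow> (\<Sum>j<5. coeff_at_inf (p j) (q j) N)"
    using A4_rational_solution_rat_fun_rep[OF sol] deg
    by (intro tendsto_sum rat_fun_rep_tendsto_div_power) auto
  have eq: "\<forall>\<^sub>F n in sequentially. (\<Sum>j<5. f j (of_nat n) / of_nat n ^ N) = inverse (of_nat n) ^ (N - 1)"
    using A4_eventually_denominators_nonzero[OF sol]
  proof (rule eventually_mono, elim conjE)
    fix n :: nat
    assume "\<forall>k<5. poly (q k) (of_nat n) \<noteq> 0" and "of_nat n \<noteq> (0::complex)"
    have "(\<Sum>j<5. f j (of_nat n) / of_nat n ^ N) = (\<Sum>j<5. f j (of_nat n)) / of_nat n ^ N"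
      by (simp add: sum_divide_distrib)
    also have "\<dots> = of_nat n / (of_nat n * of_nat n ^ (N - 1))"
      using A4_rational_solution_sum[OF sol \<open>\<forall>k<5. poly (q k) (of_nat n) \<noteq> 0\<close>] \<open>N \<ge> 1\<close>
      by (simp flip: power_Suc)
    also have "\<dots> = inverse (of_nat n) ^ (N - 1)"
      using \<open>of_nat n \<noteq> 0\<close> by (simp add: power_inverse divide_inverse)
    finally show "(\<Sum>j<5. f j (of_nat n) / of_nat n ^ N) = inverse (of_nat n) ^ (N - 1)" .
  qed
  have "(\<lambda>n. inverse (of_nat n :: complex) ^ (N - 1)) \<longlonglongrightarrow> 0 ^ (N - 1)"
    by (intro tendsto_power lim_inverse_n)
  from LIMSEQ_unique[OF Lim_transform_eventually[OF lim eq] this]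
  have "(\<Sum>j<5. coeff_at_inf (p j) (q j) N) = 0 ^ (N - 1)" .
  then show ?thesis using \<open>N \<ge> 1\<close> by simp
qed

lemma all_less_5: "(\<forall>j<5. P j) \<longleftrightarrow> P 0 \<and> P 1 \<and> P 2 \<and> P 3 \<and> P (4::nat)"
  by (auto simp: less_Suc_eq numeral_eq_Suc)

lemma ex_less_5: "(\<exists>j<5. P j) \<longleftrightarrow> P 0 \<or> P 1 \<or> P 2 \<or> P 3 \<or> P (4::nat)"
  by (auto simp: less_Suc_eq numeral_eq_Suc)

lemma A4_stationary_iff:
  "A4_stationary c \<longleftrightarrow>
     c 0 * (c 1 - c 2 + c 3 - c 4) = 0 \<and> c 1 * (c 2 - c 3 + c 4 - c 0) = 0 \<and>
     c 2 * (c 3 - c 4 + c 0 - c 1) = 0 \<and> c 3 * (c 4 - c 0 + c 1 - c 2) = 0 \<and>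
     c 4 * (c 0 - c 1 + c 2 - c 3) = 0"
  unfolding A4_stationary_def all_less_5 by (simp add: numeral_2_eq_2)

lemma sum_lessThan_5:
  fixes c :: "nat \<Rightarrow> 'a::comm_monoid_add"
  shows "(\<Sum>j<5. c j) = c 0 + c 1 + c 2 + c 3 + c 4"
  by (simp add: numeral_eq_Suc ac_simps)

lemma A4_stationary_sum_eq_0:
  fixes c :: "nat \<Rightarrow> complex"
  assumes "A4_stationary c" "(\<Sum>j<5. c j) = 0"
  shows "\<forall>j<5. c j = 0"
proof -
  have "c0 = 0 \<and> c1 = 0 \<and> c2 = 0 \<and> c3 = 0 \<and> c4 = 0"
    if "c0 * (c1 - c2 + c3 - c4) = 0" "c1 * (c2 - c3 + c4 - c0) = 0" "c2 * (c3 - c4 + c0 - c1) = 0"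
      "c3 * (c4 - c0 + c1 - c2) = 0" "c4 * (c0 - c1 + c2 - c3) = 0" "c0 + c1 + c2 + c3 + c4 = 0"
    for c0 c1 c2 c3 c4 :: complex
    \<comment> \<open>each choice of which \<open>c\<^sub>j\<close> vanish leaves a linear system\<close>
    using that by (cases "c0 = 0"; cases "c1 = 0"; cases "c2 = 0"; cases "c3 = 0"; cases "c4 = 0")
      (simp_all, auto simp: complex_eq_iff)
  then show ?thesis
    using assms unfolding A4_stationary_iff sum_lessThan_5 all_less_5 by blast
qed

definition A4_pole_pattern :: "nat set \<Rightarrow> bool" where
  "A4_pole_pattern P \<longleftrightarrow>
     (\<exists>i<5. P = {i} \<or> P = {i, (i+1) mod 5, (i+3) mod 5} \<or> P = {i, (i+1) mod 5, (i+2) mod 5})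
     \<or> P = {0..<5}"

lemma Collect_less_5_eq:
  "B \<subseteq> {..<5} \<Longrightarrow> {j. j < 5 \<and> R j} = B \<longleftrightarrow> (\<forall>j\<in>{0,1,2,3,4::nat}. R j \<longleftrightarrow> j \<in> B)"
  by (auto simp: less_Suc_eq numeral_eq_Suc)

lemma atLeastLessThan_5: "{0..<5} = {0, 1, 2, 3, 4 :: nat}"
  by (auto simp: less_Suc_eq numeral_eq_Suc)

lemma A4_stationary_sum_eq_1:
  fixes c :: "nat \<Rightarrow> complex"
  assumes "A4_stationary c" "(\<Sum>j<5. c j) = 1"
  shows "A4_pole_pattern {j. j < 5 \<and> c j \<noteq> 0}"
proof -
  have "c 0 * (c 1 - c 2 + c 3 - c 4) = 0" "c 1 * (c 2 - c 3 + c 4 - c 0) = 0"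
    "c 2 * (c 3 - c 4 + c 0 - c 1) = 0" "c 3 * (c 4 - c 0 + c 1 - c 2) = 0"
    "c 4 * (c 0 - c 1 + c 2 - c 3) = 0" "c 0 + c 1 + c 2 + c 3 + c 4 = 1"
    using assms unfolding A4_stationary_iff sum_lessThan_5 by auto
  then show ?thesis
    unfolding A4_pole_pattern_def ex_less_5
    by (simp add: Collect_less_5_eq atLeastLessThan_5)
      (cases "c 0 = 0"; cases "c 1 = 0"; cases "c 2 = 0"; cases "c 3 = 0"; cases "c 4 = 0";
       simp_all; auto simp: complex_eq_iff)
qed

lemma A4_max_pole_order_eq_1:
  assumes sol: "A4_rational_solution f p q \<alpha>"
    and le: "\<forall>j<5. pole_order_inf (p j) (q j) \<le> int N" and "N \<ge> 1"
    and "j0 < 5" and attained: "pole_order_inf (p j0) (q j0) = int N"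
  shows "N = 1"
proof (rule ccontr)
  assume "N \<noteq> 1"
  have deg: "\<forall>j<5. degree (p j) \<le> degree (q j) + N"
    using le unfolding pole_order_inf_def by fastforce
  have "q j0 \<noteq> 0"
    using A4_rational_solution_rat_fun_rep[OF sol \<open>j0 < 5\<close>] unfolding rat_fun_rep_def by simp
  then have "coeff_at_inf (p j0) (q j0) N \<noteq> 0"
    using coeff_at_inf_nonzero_iff deg \<open>N \<ge> 1\<close> \<open>j0 < 5\<close> attained by blast
  moreover have "(\<Sum>j<5. coeff_at_inf (p j) (q j) N) = 0"
    using A4_sum_coeff_at_inf[OF sol deg \<open>N \<ge> 1\<close>] \<open>N \<noteq> 1\<close> by simp
  ultimately show False
    using A4_stationary_sum_eq_0[OF A4_stationary_coeff_at_inf[OF sol deg \<open>N \<ge> 1\<close>]] \<open>j0 < 5\<close> by simp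
qed

lemma A4_simple_poles_pattern:
  assumes sol: "A4_rational_solution f p q \<alpha>"
    and le: "\<forall>j<5. pole_order_inf (p j) (q j) \<le> 1"
  shows "A4_pole_pattern {j. j < 5 \<and> pole_order_inf (p j) (q j) > 0}"
proof -
  define c where "c j = coeff_at_inf (p j) (q j) 1" for j
  have deg: "\<forall>j<5. degree (p j) \<le> degree (q j) + 1"
    using le unfolding pole_order_inf_def by fastforce
  have "c j \<noteq> 0 \<longleftrightarrow> pole_order_inf (p j) (q j) > 0" if "j < 5" for j
  proof -
    have "q j \<noteq> 0"
      using A4_rational_solution_rat_fun_rep[OF sol that] unfolding rat_fun_rep_def by simp
    then show ?thesis
      using coeff_at_inf_nonzero_iff[OF _ deg[rule_format, OF that]] le that unfolding c_def by force
  qed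
  then have "{j. j < 5 \<and> pole_order_inf (p j) (q j) > 0} = {j. j < 5 \<and> c j \<noteq> 0}" by blast
  moreover have "A4_pole_pattern {j. j < 5 \<and> c j \<noteq> 0}"
    using A4_stationary_sum_eq_1 A4_stationary_coeff_at_inf[OF sol deg] A4_sum_coeff_at_inf[OF sol deg]
    unfolding c_def by simp
  ultimately show ?thesis by simp
qed

theorem proposition1p1:
  fixes f :: "nat \<Rightarrow> complex \<Rightarrow> complex" and p q :: "nat \<Rightarrow> complex poly"
    and \<alpha> :: "nat \<Rightarrow> complex"
  assumes sol: "A4_rational_solution f p q \<alpha>"
    and pole: "\<exists>j<5. pole_order_inf (p j) (q j) > 0"
  shows "let P = {j. j < 5 \<and> pole_order_inf (p j) (q j) > 0} in
           (\<forall>j\<in>P. pole_order_inf (p j) (q j) = 1) \<and>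
           ((\<exists>i<5. P = {i}
                  \<or> P = {i, (i+1) mod 5, (i+3) mod 5}
                  \<or> P = {i, (i+1) mod 5, (i+2) mod 5})
            \<or> P = {0..<5})"
proof -
  define M where "M = Max ((\<lambda>j. pole_order_inf (p j) (q j)) ` {..<5})"
  have le_M: "\<forall>j<5. pole_order_inf (p j) (q j) \<le> M"
    unfolding M_def by simp
  have "M \<in> (\<lambda>j. pole_order_inf (p j) (q j)) ` {..<5}"
    unfolding M_def by (rule Max_in) (auto simp: lessThan_empty_iff)
  then obtain j0 where "j0 < 5" "pole_order_inf (p j0) (q j0) = M" by auto
  moreover have "M > 0" using pole le_M by fastforce
  ultimately have "nat M = 1"
    using A4_max_pole_order_eq_1[OF sol, of "nat M" j0] le_M by simp
  then have le_1: "\<forall>j<5. pole_order_inf (p j) (q j) \<le> 1"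
    using le_M \<open>M > 0\<close> by (simp add: nat_eq_iff)
  then show ?thesis
    using A4_simple_poles_pattern[OF sol le_1] unfolding A4_pole_pattern_def Let_def by force
qed
end
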